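(* Let $d\ge1$, $\sigma>0$, and let $V,W:\mathbb{R}^d\to\mathbb{R}$ satisfy the hypotheses (H) stated in the context. Let $x_0\in\mathbb{R}^d$ and let $(X_t)_{t\ge0}$ solve $$\mathrm{d}X_t=\sigma\,\mathrm{d}B_t-\Big(\nabla V(X_t)+\frac1t\int_0^t\nabla W(X_t-X_s)\,\mathrm{d}s\Big)\mathrm{d}t,\qquad X_0=x_0,$$ with $B$ a standard $d$-dimensional Brownian motion. Let $(\psi_t(x_0))_{t\ge0}$ be the deterministic path solving $$\dot\psi_t=-\nabla V(\psi_t)-\frac1t\int_0^t\nabla W(\psi_t-\psi_s)\,\mathrm{d}s,\qquad \psi_0=x_0.$$ Then for every $\xi>0$ and every $T>0$, $$\lim_{\sigma\to0}\mathbb{P}\Big(\sup_{t\in[0,T]}|X_t-\psi_t(x_0)|^2>\xi\Big)=0.$$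
   Context: Hypotheses (H): (i) $V,W\in\mathcal{C}^2(\mathbb{R}^d)$, $V\ge0$, $W\ge0$. (ii) There is a polynomial $P$ with $P(|x|)\ge1$ such that for all $x$, $|W(x)|+|\nabla W(x)|+\|\nabla^2W(x)\|+|V(x)|+|\nabla V(x)|+\|\nabla^2V(x)\|\le P(|x|)$; moreover $\nabla^2V\ge\rho>0$ and $\nabla^2W\ge\alpha>0$ everywhere, $\Delta V(x)\le aV(x)$ for some constant $a$, and $|\nabla V(x)|^2/V(x)\to\infty$ as $|x|\to\infty$. (iii) $V$ has a unique minimum at a point $m$. (iv) $W(x)=G(|x|)$ for some $G:\mathbb{R}_+\to\mathbb{R}$. *)

theory Defs
  imports "HOL-Probability.Probability" "HOL-Computational_Algebra.Polynomial"
begin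

definition std_brownian_motion :: "'a measure \<Rightarrow> (real \<Rightarrow> 'a \<Rightarrow> real^'n) \<Rightarrow> bool" where
  "std_brownian_motion M B \<longleftrightarrow>
     prob_space M \<and>
     (\<forall>t\<ge>0. B t \<in> borel_measurable M) \<and>
     (AE \<omega> in M. B 0 \<omega> = 0 \<and> continuous_on {0..} (\<lambda>t. B t \<omega>)) \<and>
     (\<forall>(ts :: nat \<Rightarrow> real) n. 0 \<le> ts 0 \<and> (\<forall>i<n. ts i \<le> ts (Suc i)) \<longrightarrow>
        prob_space.indep_vars M (\<lambda>_. borel) (\<lambda>i \<omega>. B (ts (Suc i)) \<omega> - B (ts i) \<omega>) {..<n}) \<and>
     (\<forall>s t. 0 \<le> s \<and> s < t \<longrightarrow>
        distributed M lborel (\<lambda>\<omega>. B t \<omega> - B s \<omega>)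
          (\<lambda>x. ennreal (\<Prod>i\<in>UNIV. normal_density 0 (sqrt (t - s)) (x $ i))))"

text \<open>Integral form of  dx_t = db_t - (gV(x_t) + (1/t) int_0^t gW(x_t - x_s) ds) dt, x_0 = x0,
  driven by a continuous path b with b 0 = 0.\<close>
definition self_interacting_path ::
  "(real^'n \<Rightarrow> real^'n) \<Rightarrow> (real^'n \<Rightarrow> real^'n) \<Rightarrow> real^'n \<Rightarrow> (real \<Rightarrow> real^'n)
     \<Rightarrow> (real \<Rightarrow> real^'n) \<Rightarrow> bool" where
  "self_interacting_path gV gW x0 b x \<longleftrightarrow>
     continuous_on {0..} x \<and>
     (\<forall>t\<ge>0. x t = x0 + b t -
        integral {0..t} (\<lambda>s. gV (x s) + (1 / s) *\<^sub>R integral {0..s} (\<lambda>u. gW (x s - x u))))"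

text \<open>Outer probability (equals prob on measurable events; avoids measurability side issues).\<close>
definition outer_prob :: "'a measure \<Rightarrow> 'a set \<Rightarrow> real" where
  "outer_prob M A = Inf {measure M N | N. N \<in> sets M \<and> A \<inter> space M \<subseteq> N}"

end

theory Submission
  imports Defs
begin

(* The statement is a pathwise stability property of the integral equation.
   On [0,T] the deterministic path psi stays in a ball of radius R, and since the Hessians
   are polynomially bounded, grad V and grad W are Lipschitz with a common constant L on the
   balls of radius R + 1 and 2(R + 1). While |x - psi| <= 1, the deviation x - psi grows over
   a time step of length h with 6 L h <= 1 by at most twice the noise plus half its running
   maximum, so over K = T / h steps it stays below 6^K delta when the noise stays below
   delta; a continuity argument removes the proviso |x - psi| <= 1. Brownian paths are almost
   surely bounded on [0,T], so the noise sigma B stays below delta with probability tending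
   to 1 as sigma -> 0. *)

lemma continuous_bootstrap:
  fixes f :: "real \<Rightarrow> real"
  assumes cont: "continuous_on {0..T} f" and "0 \<le> T" and f0: "f 0 \<le> c" and "c < 1"
    and improve: "\<And>t. t \<in> {0..T} \<Longrightarrow> \<forall>s\<in>{0..t}. f s \<le> 1 \<Longrightarrow> \<forall>s\<in>{0..t}. f s \<le> c"
  shows "\<forall>t\<in>{0..T}. f t \<le> c"
proof (cases "\<forall>s\<in>{0..T}. f s \<le> 1")
  case True
  then show ?thesis using improve[of T] \<open>0 \<le> T\<close> by auto
next
  case False
  define Z where "Z = {0..T} \<inter> f -` {1..}"
  have "compact Z"
    unfolding Z_def compact_eq_bounded_closed
  proof
    show "bounded ({0..T} \<inter> f -` {1..})" by (rule bounded_subset[OF bounded_closed_interval]) blast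
    show "closed ({0..T} \<inter> f -` {1..})" by (rule continuous_closed_preimage[OF cont]) auto
  qed
  moreover have "Z \<noteq> {}" using False by (auto simp: Z_def)
  ultimately obtain u0 where u0: "u0 \<in> Z" and first: "\<And>u. u \<in> Z \<Longrightarrow> u0 \<le> u"
    by (meson compact_attains_inf)
  have "f 0 \<le> 1" "1 \<le> f u0" "0 \<le> u0" using f0 \<open>c < 1\<close> u0 by (auto simp: Z_def)
  moreover have "continuous_on {0..u0} f"
    using continuous_on_subset[OF cont] u0 by (auto simp: Z_def)
  ultimately obtain u1 where "0 \<le> u1" "u1 \<le> u0" "f u1 = 1"
    using IVT'[of f 0 1 u0] by blast
  then have "u1 = u0" "u0 \<in> {0..T}" using first[of u1] u0 by (auto simp: Z_def)
  have "\<forall>s\<in>{0..u0}. f s \<le> 1"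
  proof
    fix s assume "s \<in> {0..u0}"
    show "f s \<le> 1"
    proof (cases "s = u0")
      case False
      then have "s \<notin> Z" using first[of s] \<open>s \<in> {0..u0}\<close> by force
      then show ?thesis using \<open>s \<in> {0..u0}\<close> \<open>u0 \<in> {0..T}\<close> by (auto simp: Z_def)
    qed (use \<open>f u1 = 1\<close> \<open>u1 = u0\<close> in simp)
  qed
  then have "f u0 \<le> c" using improve[OF \<open>u0 \<in> {0..T}\<close>] \<open>0 \<le> u0\<close> by auto
  then show ?thesis using \<open>1 \<le> f u0\<close> \<open>c < 1\<close> by simp
qed

(* A discrete Gronwall argument: over each step of length h the running maximum of f at
   most doubles, up to the additive 4 delta. *)
lemma stepwise_growth_bound:
  fixes f :: "real \<Rightarrow> real"
  assumes cont: "continuous_on {0..t} f" and f0: "f 0 \<le> \<delta>" and "0 \<le> \<delta>" and "0 < h"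
    and increment: "\<And>a s N. 0 \<le> a \<Longrightarrow> a \<le> s \<Longrightarrow> s \<le> t \<Longrightarrow> s - a \<le> h \<Longrightarrow>
        \<forall>u\<in>{0..s}. f u \<le> N \<Longrightarrow> f s \<le> f a + 2 * \<delta> + N / 2"
  shows "\<forall>s\<in>{0..t}. s \<le> real k * h \<longrightarrow> f s \<le> 6 ^ k * \<delta>"
proof (induction k)
  case 0
  show ?case using f0 by auto
next
  case (Suc k)
  show ?case
  proof (intro ballI impI)
    fix s assume s: "s \<in> {0..t}" "s \<le> real (Suc k) * h"
    define s' where "s' = min t (real (Suc k) * h)"
    have "s \<in> {0..s'}" using s by (simp add: s'_def)
    moreover have "continuous_on {0..s'} f"
      by (rule continuous_on_subset[OF cont]) (simp add: s'_def)
    ultimately obtain s0 where s0: "s0 \<in> {0..s'}" and max: "\<And>u. u \<in> {0..s'} \<Longrightarrow> f u \<le> f s0"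
      using continuous_attains_sup[of "{0..s'}" f] by fastforce
    have "f s0 \<le> 6 ^ Suc k * \<delta>"
    proof (cases "s0 \<le> real k * h")
      case True
      then have "f s0 \<le> 6 ^ k * \<delta>" using Suc s0 by (simp add: s'_def)
      also have "\<dots> \<le> 6 ^ Suc k * \<delta>" using \<open>0 \<le> \<delta>\<close> by simp
      finally show ?thesis .
    next
      case False
      define a where "a = real k * h"
      have a: "0 \<le> a" "a \<le> s0" "s0 \<le> t" "s0 - a \<le> h"
        using False s0 \<open>0 < h\<close> by (auto simp: a_def s'_def algebra_simps)
      have "f s0 \<le> f a + 2 * \<delta> + f s0 / 2"
        by (rule increment[OF a]) (use s0 max in \<open>auto simp: s'_def\<close>)
      moreover have "f a \<le> 6 ^ k * \<delta>" using Suc a by (simp add: a_def)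
      moreover have "1 * \<delta> \<le> 6 ^ k * \<delta>" using \<open>0 \<le> \<delta>\<close> by (intro mult_right_mono) auto
      ultimately show ?thesis by simp
    qed
    then show "f s \<le> 6 ^ Suc k * \<delta>" using max[OF \<open>s \<in> {0..s'}\<close>] by simp
  qed
qed

lemma poly_bounded_derivative_imp_lipschitz_on_cball:
  fixes g :: "'a::real_normed_vector \<Rightarrow> 'b::real_normed_vector" and P :: "real poly"
  assumes deriv: "\<And>x. (g has_derivative g' x) (at x)" and bound: "\<And>x. onorm (g' x) \<le> poly P (norm x)"
  shows "\<exists>L. L-lipschitz_on (cball 0 R) g"
proof -
  obtain C where "0 \<le> C" and C: "\<And>r. r \<in> {0..R} \<Longrightarrow> norm (poly P r) \<le> C"
    using continuous_on_compact_bound[OF compact_Icc continuous_on_poly[OF continuous_on_id]] by blast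
  have "C-lipschitz_on (cball 0 R) g"
  proof (rule bounded_derivative_imp_lipschitz[OF has_derivative_at_withinI[OF deriv] convex_cball _ \<open>0 \<le> C\<close>])
    fix x :: 'a assume "x \<in> cball 0 R"
    then have "norm (poly P (norm x)) \<le> C" by (intro C) auto
    then show "onorm (g' x) \<le> C" using bound[of x] by simp
  qed
  then show ?thesis ..
qed

lemma lipschitz_on_cballs_imp_continuous_on:
  fixes g :: "'a::{real_normed_vector, perfect_space} \<Rightarrow> 'b::metric_space"
  assumes "\<And>R. \<exists>L. L-lipschitz_on (cball 0 R) g"
  shows "continuous_on UNIV g"
proof (rule continuous_at_imp_continuous_on, intro ballI)
  fix x :: 'a
  obtain L where "L-lipschitz_on (cball 0 (norm x + 1)) g" using assms by blast
  then have "continuous_on (cball 0 (norm x + 1)) g" by (rule lipschitz_on_continuous_on)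
  then show "isCont g x" by (rule continuous_on_interior) simp
qed

lemma bound_on_rationals_imp_bound:
  fixes f :: "real \<Rightarrow> 'b::real_normed_vector"
  assumes cont: "continuous_on {a..b} f" and "a < b"
    and bound: "\<And>q. q \<in> \<rat> \<Longrightarrow> q \<in> {a..b} \<Longrightarrow> norm (f q) \<le> c"
  shows "\<forall>t\<in>{a..b}. norm (f t) \<le> c"
proof -
  have "closed ({a..b} \<inter> (\<lambda>t. norm (f t)) -` {..c})"
    by (intro continuous_closed_preimage continuous_on_norm cont) auto
  moreover have "{a..b} \<inter> \<rat> \<subseteq> {a..b} \<inter> (\<lambda>t. norm (f t)) -` {..c}" using bound by auto
  ultimately have "closure ({a..b} \<inter> \<rat>) \<subseteq> {a..b} \<inter> (\<lambda>t. norm (f t)) -` {..c}"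
    by (rule closure_minimal[rotated])
  moreover have "closure ({a..b} \<inter> \<rat>) = {a..b}"
    using \<open>a < b\<close> by (simp add: closure_convex_Int_superset Rats_closure_real)
  ultimately show ?thesis by auto
qed

section \<open>The self-interacting integral equation\<close>

(* At s = 0 the factor 1 / s is 0 in HOL; this single point does not affect the integrals. *)
definition interaction_drift :: "('a::euclidean_space \<Rightarrow> 'a) \<Rightarrow> ('a \<Rightarrow> 'a) \<Rightarrow> (real \<Rightarrow> 'a) \<Rightarrow> real \<Rightarrow> 'a"
  where "interaction_drift g w x s = g (x s) + (1 / s) *\<^sub>R integral {0..s} (\<lambda>u. w (x s - x u))"

lemma self_interacting_path_iff_drift:
  "self_interacting_path g w x0 b x \<longleftrightarrow>
     continuous_on {0..} x \<and> (\<forall>t\<ge>0. x t = x0 + b t - integral {0..t} (interaction_drift g w x))"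
  by (simp add: self_interacting_path_def interaction_drift_def[abs_def])

lemma self_interacting_path_initial:
  "self_interacting_path g w x0 b x \<Longrightarrow> x 0 = x0 + b 0"
  by (simp add: self_interacting_path_def)

lemma continuous_on_interaction_integral:
  fixes w :: "'a::euclidean_space \<Rightarrow> 'a" and x :: "real \<Rightarrow> 'a"
  assumes cw: "continuous_on UNIV w" and cx: "continuous_on {0..t} x"
  shows "continuous_on {0..t} (\<lambda>s. integral {0..s} (\<lambda>u. w (x s - x u)))"
proof -
  (* Continuing the integrand by w 0 on [s,t] turns the variable upper limit into a
     parameter integral over the fixed interval [0,t]. *)
  define J where "J s = integral {0..t} (\<lambda>u. w (x s - x (min u s)))" for s
  have "continuous_on ({0..t} \<times> {0..t}) (\<lambda>p. w (x (fst p) - x (min (snd p) (fst p))))"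
    by (intro continuous_on_compose2[OF cw] continuous_intros continuous_on_compose2[OF cx]) auto
  then have "continuous_on {0..t} J"
    unfolding J_def using integral_continuous_on_param[of "{0..t}" 0 t "\<lambda>s u. w (x s - x (min u s))"]
    by (simp add: cbox_interval case_prod_beta)
  then have "continuous_on {0..t} (\<lambda>s. J s - (t - s) *\<^sub>R w 0)"
    by (intro continuous_intros)
  moreover have "J s - (t - s) *\<^sub>R w 0 = integral {0..s} (\<lambda>u. w (x s - x u))" if s: "s \<in> {0..t}" for s
  proof -
    have "continuous_on {0..t} (\<lambda>u. w (x s - x (min u s)))"
      using s by (intro continuous_on_compose2[OF cw] continuous_intros continuous_on_compose2[OF cx]) auto
    then have "J s = integral {0..s} (\<lambda>u. w (x s - x (min u s))) + integral {s..t} (\<lambda>u. w (x s - x (min u s)))"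
      unfolding J_def using s by (intro Henstock_Kurzweil_Integration.integral_combine[symmetric] integrable_continuous_interval) auto
    also have "integral {0..s} (\<lambda>u. w (x s - x (min u s))) = integral {0..s} (\<lambda>u. w (x s - x u))"
      by (rule integral_cong) auto
    also have "integral {s..t} (\<lambda>u. w (x s - x (min u s))) = integral {s..t} (\<lambda>u. w 0)"
      by (rule integral_cong) auto
    finally show ?thesis using s by simp
  qed
  ultimately show ?thesis by (rule continuous_on_eq)
qed

lemma interaction_drift_integrable:
  fixes g w :: "'a::euclidean_space \<Rightarrow> 'a" and x :: "real \<Rightarrow> 'a"
  assumes cg: "continuous_on UNIV g" and cw: "continuous_on UNIV w" and cx: "continuous_on {0..t} x"
  shows "interaction_drift g w x integrable_on {0..t}"
proof -
  obtain R where R: "\<And>s. s \<in> {0..t} \<Longrightarrow> norm (x s) \<le> R"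
    using continuous_on_compact_bound[OF compact_Icc cx] by blast
  obtain Bw where Bw: "\<And>y. y \<in> cball 0 (2 * R) \<Longrightarrow> norm (w y) \<le> Bw"
    using continuous_on_compact_bound[OF compact_cball continuous_on_subset[OF cw]] by blast
  obtain Bg where Bg: "\<And>y. y \<in> cball 0 R \<Longrightarrow> norm (g y) \<le> Bg"
    using continuous_on_compact_bound[OF compact_cball continuous_on_subset[OF cg]] by blast
  have bound: "norm (interaction_drift g w x s) \<le> Bg + Bw" if s: "s \<in> {0<..t}" for s
  proof -
    have "norm (integral {0..s} (\<lambda>u. w (x s - x u))) \<le> Bw * (s - 0)"
    proof (rule integral_bound)
      show "continuous_on {0..s} (\<lambda>u. w (x s - x u))"
        using s by (intro continuous_on_compose2[OF cw] continuous_intros continuous_on_subset[OF cx]) auto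
      fix u assume u: "u \<in> {0..s}"
      have "norm (x s - x u) \<le> 2 * R"
        using norm_triangle_ineq4[of "x s" "x u"] R[of s] R[of u] u s by auto
      then show "norm (w (x s - x u)) \<le> Bw" by (intro Bw) auto
    qed (use s in auto)
    then have "norm ((1 / s) *\<^sub>R integral {0..s} (\<lambda>u. w (x s - x u))) \<le> Bw"
      using s by (simp add: field_simps)
    moreover have "norm (g (x s)) \<le> Bg" using Bg R[of s] s by auto
    ultimately show ?thesis unfolding interaction_drift_def by (meson add_mono norm_triangle_le)
  qed
  have "continuous_on {0<..t} (interaction_drift g w x)"
    unfolding interaction_drift_def
    by (intro continuous_intros continuous_on_compose2[OF cg] continuous_on_subset[OF cx]
        continuous_on_subset[OF continuous_on_interaction_integral[OF cw cx]]) auto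
  then have meas: "interaction_drift g w x \<in> borel_measurable (lebesgue_on {0<..t})"
    by (rule continuous_imp_measurable_on_sets_lebesgue) auto
  have neg: "negligible (({0<..t} - {0..t}) \<union> ({0..t} - {0<..t}))"
    by (rule negligible_subset[of "{0}"]) auto
  have "(\<lambda>s. Bg + Bw) integrable_on {0..t}"
    by (rule integrable_continuous_interval) (rule continuous_on_const)
  then have "(\<lambda>s. Bg + Bw) integrable_on {0<..t}"
    using integrable_spike_set_eq[OF neg] by blast
  then have "interaction_drift g w x integrable_on {0<..t}"
    by (rule measurable_bounded_by_integrable_imp_integrable[OF meas _ bound]) auto
  then show ?thesis using integrable_spike_set_eq[OF neg] by blast
qed

lemma interaction_integral_lipschitz_estimate:
  fixes w :: "'a::euclidean_space \<Rightarrow> 'a" and x y :: "real \<Rightarrow> 'a"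
  assumes Lw: "L-lipschitz_on (cball 0 (2 * R)) w"
    and cw: "continuous_on UNIV w" and cx: "continuous_on {0..r} x" and cy: "continuous_on {0..r} y"
    and xR: "\<And>u. u \<in> {0..r} \<Longrightarrow> norm (x u) \<le> R" and yR: "\<And>u. u \<in> {0..r} \<Longrightarrow> norm (y u) \<le> R"
    and close: "\<And>u. u \<in> {0..r} \<Longrightarrow> norm (x u - y u) \<le> N" and "0 \<le> r"
  shows "norm (integral {0..r} (\<lambda>u. w (x r - x u)) - integral {0..r} (\<lambda>u. w (y r - y u))) \<le> 2 * L * N * r"
proof -
  have r: "r \<in> {0..r}" using \<open>0 \<le> r\<close> by simp
  have "0 \<le> L" using Lw by (rule lipschitz_on_nonneg)
  have cwx: "continuous_on {0..r} (\<lambda>u. w (x r - x u))"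
    using r by (intro continuous_on_compose2[OF cw] continuous_intros cx) auto
  have cwy: "continuous_on {0..r} (\<lambda>u. w (y r - y u))"
    using r by (intro continuous_on_compose2[OF cw] continuous_intros cy) auto
  have "norm (integral {0..r} (\<lambda>u. w (x r - x u) - w (y r - y u))) \<le> 2 * L * N * (r - 0)"
  proof (rule integral_bound)
    fix u assume u: "u \<in> {0..r}"
    have "norm (x r - x u) \<le> 2 * R" "norm (y r - y u) \<le> 2 * R"
      using norm_triangle_ineq4[of "x r" "x u"] norm_triangle_ineq4[of "y r" "y u"]
        xR[OF r] xR[OF u] yR[OF r] yR[OF u] by linarith+
    then have "norm (w (x r - x u) - w (y r - y u)) \<le> L * norm ((x r - x u) - (y r - y u))"
      using lipschitz_on_normD[OF Lw] by simp
    also have "\<dots> = L * norm ((x r - y r) - (x u - y u))"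
      by (simp add: algebra_simps)
    also have "\<dots> \<le> L * (2 * N)"
      using norm_triangle_ineq4[of "x r - y r" "x u - y u"] close[OF r] close[OF u] \<open>0 \<le> L\<close>
      by (intro mult_left_mono) auto
    finally show "norm (w (x r - x u) - w (y r - y u)) \<le> 2 * L * N" by simp
  qed (use \<open>0 \<le> r\<close> cwx cwy in \<open>auto intro: continuous_on_diff\<close>)
  moreover have "integral {0..r} (\<lambda>u. w (x r - x u) - w (y r - y u))
      = integral {0..r} (\<lambda>u. w (x r - x u)) - integral {0..r} (\<lambda>u. w (y r - y u))"
    using cwx cwy by (intro integral_diff integrable_continuous_interval)
  ultimately show ?thesis by simp
qed

lemma interaction_drift_lipschitz_estimate:
  fixes g w :: "'a::euclidean_space \<Rightarrow> 'a" and x y :: "real \<Rightarrow> 'a"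
  assumes Lg: "L-lipschitz_on (cball 0 R) g" and Lw: "L-lipschitz_on (cball 0 (2 * R)) w"
    and cw: "continuous_on UNIV w" and cx: "continuous_on {0..r} x" and cy: "continuous_on {0..r} y"
    and xR: "\<And>u. u \<in> {0..r} \<Longrightarrow> norm (x u) \<le> R" and yR: "\<And>u. u \<in> {0..r} \<Longrightarrow> norm (y u) \<le> R"
    and close: "\<And>u. u \<in> {0..r} \<Longrightarrow> norm (x u - y u) \<le> N" and "0 \<le> r"
  shows "norm (interaction_drift g w x r - interaction_drift g w y r) \<le> 3 * L * N"
proof -
  have r: "r \<in> {0..r}" using \<open>0 \<le> r\<close> by simp
  have "0 \<le> L" using Lg by (rule lipschitz_on_nonneg)
  have "0 \<le> N" using close[OF r] norm_ge_zero order_trans by blast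
  have "norm (g (x r) - g (y r)) \<le> L * norm (x r - y r)"
    using lipschitz_on_normD[OF Lg] xR[OF r] yR[OF r] by simp
  also have "\<dots> \<le> L * N" using close[OF r] \<open>0 \<le> L\<close> by (rule mult_left_mono)
  finally have local: "norm (g (x r) - g (y r)) \<le> L * N" .
  define I where "I z = integral {0..r} (\<lambda>u. w (z r - z u))" for z :: "real \<Rightarrow> 'a"
  have "norm (I x - I y) \<le> 2 * L * N * r"
    unfolding I_def by (rule interaction_integral_lipschitz_estimate[OF Lw cw cx cy xR yR close \<open>0 \<le> r\<close>])
  then have nonlocal: "norm ((1 / r) *\<^sub>R I x - (1 / r) *\<^sub>R I y) \<le> 2 * L * N"
    using \<open>0 \<le> r\<close> \<open>0 \<le> L\<close> \<open>0 \<le> N\<close>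
    by (cases "r = 0") (simp_all add: scaleR_diff_right[symmetric] divide_le_eq mult.commute)
  have "interaction_drift g w x r - interaction_drift g w y r
      = (g (x r) - g (y r)) + ((1 / r) *\<^sub>R I x - (1 / r) *\<^sub>R I y)"
    by (simp add: interaction_drift_def I_def)
  then show ?thesis
    using norm_triangle_le[OF add_mono[OF local nonlocal]] by simp
qed

lemma self_interacting_path_increment:
  assumes cg: "continuous_on UNIV g" and cw: "continuous_on UNIV w"
    and x: "self_interacting_path g w x0 b x" and "0 \<le> a" "a \<le> s"
  shows "x s = x a + (b s - b a) - integral {a..s} (interaction_drift g w x)"
proof -
  have cx: "continuous_on {0..} x" and x_eq: "\<And>t. 0 \<le> t \<Longrightarrow> x t = x0 + b t - integral {0..t} (interaction_drift g w x)"
    using x by (simp_all add: self_interacting_path_iff_drift)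
  have "interaction_drift g w x integrable_on {0..s}"
    by (rule interaction_drift_integrable[OF cg cw continuous_on_subset[OF cx]]) auto
  then have "integral {0..s} (interaction_drift g w x)
      = integral {0..a} (interaction_drift g w x) + integral {a..s} (interaction_drift g w x)"
    by (rule Henstock_Kurzweil_Integration.integral_combine[symmetric, OF \<open>0 \<le> a\<close> \<open>a \<le> s\<close>])
  then show ?thesis using x_eq[of s] x_eq[of a] assms by simp
qed

lemma self_interacting_paths_increment_estimate:
  fixes g w :: "real^'n \<Rightarrow> real^'n"
  assumes cg: "continuous_on UNIV g" and cw: "continuous_on UNIV w"
    and Lg: "L-lipschitz_on (cball 0 R) g" and Lw: "L-lipschitz_on (cball 0 (2 * R)) w"
    and x: "self_interacting_path g w x0 b x" and y: "self_interacting_path g w x0 c y"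
    and xR: "\<And>u. u \<in> {0..s} \<Longrightarrow> norm (x u) \<le> R" and yR: "\<And>u. u \<in> {0..s} \<Longrightarrow> norm (y u) \<le> R"
    and close: "\<And>u. u \<in> {0..s} \<Longrightarrow> norm (x u - y u) \<le> N" and "0 \<le> a" "a \<le> s"
  shows "norm (x s - y s) \<le> norm (x a - y a) + norm ((b s - b a) - (c s - c a)) + (s - a) * (3 * L * N)"
proof -
  have cx: "continuous_on {0..} x" and cy: "continuous_on {0..} y"
    using x y by (simp_all add: self_interacting_path_iff_drift)
  have ix: "interaction_drift g w x integrable_on {a..s}"
    by (rule interaction_drift_integrable[OF cg cw continuous_on_subset[OF cx], THEN integrable_on_subinterval])
      (use \<open>0 \<le> a\<close> in auto)
  have iy: "interaction_drift g w y integrable_on {a..s}"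
    by (rule interaction_drift_integrable[OF cg cw continuous_on_subset[OF cy], THEN integrable_on_subinterval])
      (use \<open>0 \<le> a\<close> in auto)
  have "norm (integral {a..s} (\<lambda>r. interaction_drift g w x r - interaction_drift g w y r))
      \<le> integral {a..s} (\<lambda>r. 3 * L * N)"
  proof (rule integral_norm_bound_integral)
    fix r assume r: "r \<in> {a..s}"
    show "norm (interaction_drift g w x r - interaction_drift g w y r) \<le> 3 * L * N"
      by (rule interaction_drift_lipschitz_estimate[OF Lg Lw cw continuous_on_subset[OF cx]
          continuous_on_subset[OF cy]]) (use r \<open>0 \<le> a\<close> xR yR close in auto)
  qed (use ix iy in \<open>auto intro: integrable_diff\<close>)
  also have "\<dots> = (s - a) * (3 * L * N)" using \<open>a \<le> s\<close> by simp
  finally have drift_gap: "norm (integral {a..s} (\<lambda>r. interaction_drift g w x r - interaction_drift g w y r))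
      \<le> (s - a) * (3 * L * N)" .
  have "x s - y s = (x a - y a) + ((b s - b a) - (c s - c a))
      - integral {a..s} (\<lambda>r. interaction_drift g w x r - interaction_drift g w y r)"
    unfolding integral_diff[OF ix iy]
    by (subst self_interacting_path_increment[OF cg cw x \<open>0 \<le> a\<close> \<open>a \<le> s\<close>],
        subst self_interacting_path_increment[OF cg cw y \<open>0 \<le> a\<close> \<open>a \<le> s\<close>])
      (simp add: algebra_simps)
  then have "norm (x s - y s) \<le> norm ((x a - y a) + ((b s - b a) - (c s - c a)))
      + norm (integral {a..s} (\<lambda>r. interaction_drift g w x r - interaction_drift g w y r))"
    by (simp only: norm_triangle_ineq4)
  also have "\<dots> \<le> norm (x a - y a) + norm ((b s - b a) - (c s - c a)) + (s - a) * (3 * L * N)"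
    by (intro add_mono norm_triangle_ineq drift_gap)
  finally show ?thesis .
qed

(* The a priori bound "near" keeps x in the ball where L is a Lipschitz constant. *)
lemma self_interacting_path_deviation_step:
  fixes g w :: "real^'n \<Rightarrow> real^'n"
  assumes cg: "continuous_on UNIV g" and cw: "continuous_on UNIV w"
    and Lg: "L-lipschitz_on (cball 0 (R + 1)) g" and Lw: "L-lipschitz_on (cball 0 (2 * (R + 1))) w"
    and \<psi>: "self_interacting_path g w x0 (\<lambda>t. 0) \<psi>" and \<psi>R: "\<And>u. u \<in> {0..s} \<Longrightarrow> norm (\<psi> u) \<le> R"
    and x: "self_interacting_path g w x0 b x" and b: "\<And>u. u \<in> {0..s} \<Longrightarrow> norm (b u) \<le> \<delta>"
    and near: "\<And>u. u \<in> {0..s} \<Longrightarrow> norm (x u - \<psi> u) \<le> 1"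
    and N: "\<And>u. u \<in> {0..s} \<Longrightarrow> norm (x u - \<psi> u) \<le> N"
    and a: "0 \<le> a" "a \<le> s" "s - a \<le> h" and Lh: "6 * L * h \<le> 1"
  shows "norm (x s - \<psi> s) \<le> norm (x a - \<psi> a) + 2 * \<delta> + N / 2"
proof -
  define N' where "N' = min N 1"
  have close: "norm (x u - \<psi> u) \<le> N'" if "u \<in> {0..s}" for u
    using N[OF that] near[OF that] by (simp add: N'_def)
  have "norm (x 0 - \<psi> 0) \<le> N'" using a by (intro close) simp
  then have "0 \<le> N'" using norm_ge_zero order_trans by blast
  have "0 \<le> L" using Lg by (rule lipschitz_on_nonneg)
  have \<psi>u: "norm (\<psi> u) \<le> R + 1" if "u \<in> {0..s}" for u using \<psi>R[OF that] by simp
  have xu: "norm (x u) \<le> R + 1" if "u \<in> {0..s}" for u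
    using norm_triangle_sub[of "x u" "\<psi> u"] \<psi>R[OF that] near[OF that] by simp
  have "norm (x s - \<psi> s) \<le> norm (x a - \<psi> a) + norm ((b s - b a) - (0 - 0)) + (s - a) * (3 * L * N')"
    using self_interacting_paths_increment_estimate[OF cg cw Lg Lw x \<psi> xu \<psi>u close a(1,2)] by simp
  also have "norm ((b s - b a) - (0 - 0)) \<le> 2 * \<delta>"
    using norm_triangle_ineq4[of "b s" "b a"] b[of s] b[of a] a by simp
  also have "(s - a) * (3 * L * N') \<le> h * (3 * L * N')"
    using a \<open>0 \<le> L\<close> \<open>0 \<le> N'\<close> by (intro mult_right_mono) auto
  also have "\<dots> = (6 * L * h) * N' / 2" by simp
  also have "\<dots> \<le> N' / 2" using mult_right_mono[OF Lh \<open>0 \<le> N'\<close>] by (simp add: ac_simps)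
  also have "\<dots> \<le> N / 2" by (simp add: N'_def)
  finally show ?thesis by simp
qed

lemma self_interacting_path_deviation_bound:
  fixes g w :: "real^'n \<Rightarrow> real^'n"
  assumes cg: "continuous_on UNIV g" and cw: "continuous_on UNIV w"
    and Lg: "L-lipschitz_on (cball 0 (R + 1)) g" and Lw: "L-lipschitz_on (cball 0 (2 * (R + 1))) w"
    and \<psi>: "self_interacting_path g w x0 (\<lambda>t. 0) \<psi>" and \<psi>R: "\<And>t. t \<in> {0..T} \<Longrightarrow> norm (\<psi> t) \<le> R"
    and x: "self_interacting_path g w x0 b x" and b: "\<And>t. t \<in> {0..T} \<Longrightarrow> norm (b t) \<le> \<delta>"
    and "0 < T" and K: "0 < K" "6 * L * T \<le> real K" and small: "6 ^ K * \<delta> < 1"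
  shows "\<forall>t\<in>{0..T}. norm (x t - \<psi> t) \<le> 6 ^ K * \<delta>"
proof -
  define D where "D t = norm (x t - \<psi> t)" for t
  define h where "h = T / real K"
  have b0: "norm (b 0) \<le> \<delta>" using b \<open>0 < T\<close> by simp
  then have "0 \<le> \<delta>" using norm_ge_zero order_trans by blast
  have h: "0 < h" "real K * h = T" "6 * L * h \<le> 1"
    using \<open>0 < T\<close> K by (simp_all add: h_def pos_divide_le_eq)
  have D0: "D 0 \<le> \<delta>"
    using b0 self_interacting_path_initial[OF x] self_interacting_path_initial[OF \<psi>]
    by (simp add: D_def)
  have "continuous_on {0..} x" "continuous_on {0..} \<psi>"
    using x \<psi> by (simp_all add: self_interacting_path_def)
  then have "continuous_on {0..T} x" "continuous_on {0..T} \<psi>"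
    by (meson atLeastAtMost_iff atLeast_iff continuous_on_subset subsetI)+
  then have cD: "continuous_on {0..T} D"
    unfolding D_def by (intro continuous_intros)
  have "\<forall>t\<in>{0..T}. D t \<le> 6 ^ K * \<delta>"
  proof (rule continuous_bootstrap[OF cD less_imp_le[OF \<open>0 < T\<close>] _ small])
    have "1 * \<delta> \<le> 6 ^ K * \<delta>" using \<open>0 \<le> \<delta>\<close> by (intro mult_right_mono) auto
    then show "D 0 \<le> 6 ^ K * \<delta>" using D0 by simp
    fix t assume t: "t \<in> {0..T}" and near: "\<forall>s\<in>{0..t}. D s \<le> 1"
    have "\<forall>s\<in>{0..t}. s \<le> real K * h \<longrightarrow> D s \<le> 6 ^ K * \<delta>"
    proof (rule stepwise_growth_bound[where f = D and t = t, OF _ D0 \<open>0 \<le> \<delta>\<close> \<open>0 < h\<close>])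
      show "continuous_on {0..t} D" using t by (intro continuous_on_subset[OF cD]) auto
      fix a s N assume a: "0 \<le> a" "a \<le> s" "s \<le> t" "s - a \<le> h" and N: "\<forall>u\<in>{0..s}. D u \<le> N"
      show "D s \<le> D a + 2 * \<delta> + N / 2"
        unfolding D_def
        by (rule self_interacting_path_deviation_step[OF cg cw Lg Lw \<psi> _ x _ _ _ a(1,2,4) h(3)])
          (use \<psi>R b near N a t in \<open>auto simp: D_def\<close>)
    qed
    then show "\<forall>s\<in>{0..t}. D s \<le> 6 ^ K * \<delta>" using t h(2) by auto
  qed
  then show ?thesis by (simp add: D_def)
qed

lemma self_interacting_path_stable:
  fixes g w :: "real^'n \<Rightarrow> real^'n"
  assumes Lg: "\<And>R. \<exists>L. L-lipschitz_on (cball 0 R) g" and Lw: "\<And>R. \<exists>L. L-lipschitz_on (cball 0 R) w"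
    and \<psi>: "self_interacting_path g w x0 (\<lambda>t. 0) \<psi>" and "0 < T" and "0 < \<epsilon>"
  obtains \<delta> where "0 < \<delta>"
    "\<And>b x. self_interacting_path g w x0 b x \<Longrightarrow> \<forall>t\<in>{0..T}. norm (b t) \<le> \<delta> \<Longrightarrow>
       \<forall>t\<in>{0..T}. norm (x t - \<psi> t) \<le> \<epsilon>"
proof -
  have "continuous_on {0..} \<psi>" using \<psi> by (simp add: self_interacting_path_def)
  then obtain R where R: "\<And>t. t \<in> {0..T} \<Longrightarrow> norm (\<psi> t) \<le> R"
    using continuous_on_compact_bound[OF compact_Icc continuous_on_subset, of "{0..}" \<psi> 0 T] by auto
  obtain L1 L2 where L1: "L1-lipschitz_on (cball 0 (R + 1)) g" and L2: "L2-lipschitz_on (cball 0 (2 * (R + 1))) w"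
    using Lg Lw by blast
  define L where "L = max L1 L2"
  have Lg': "L-lipschitz_on (cball 0 (R + 1)) g" and Lw': "L-lipschitz_on (cball 0 (2 * (R + 1))) w"
    using lipschitz_on_le[OF L1] lipschitz_on_le[OF L2] by (simp_all add: L_def)
  define K where "K = nat \<lceil>6 * L * T\<rceil> + 1"
  have K: "0 < K" "6 * L * T \<le> real K" unfolding K_def by linarith+
  define \<delta> where "\<delta> = min (1 / 2) \<epsilon> / 6 ^ K"
  have "0 < \<delta>" using \<open>0 < \<epsilon>\<close> by (simp add: \<delta>_def)
  moreover have "6 ^ K * \<delta> = min (1 / 2) \<epsilon>" by (simp add: \<delta>_def)
  moreover have "\<forall>t\<in>{0..T}. norm (x t - \<psi> t) \<le> 6 ^ K * \<delta>"
    if x: "self_interacting_path g w x0 b x" and b: "\<forall>t\<in>{0..T}. norm (b t) \<le> \<delta>" for b x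
    by (rule self_interacting_path_deviation_bound[OF lipschitz_on_cballs_imp_continuous_on[OF Lg]
        lipschitz_on_cballs_imp_continuous_on[OF Lw] Lg' Lw' \<psi> R x _ \<open>0 < T\<close> K])
      (use b \<open>6 ^ K * \<delta> = min (1 / 2) \<epsilon>\<close> in auto)
  ultimately show ?thesis using that by fastforce
qed

section \<open>Outer probability of large excursions\<close>

lemma outer_prob_nonneg: "0 \<le> outer_prob M A"
  unfolding outer_prob_def by (rule cInf_greatest) auto

lemma outer_prob_le_measure:
  assumes "N \<in> sets M" "A \<inter> space M \<subseteq> N"
  shows "outer_prob M A \<le> measure M N"
  unfolding outer_prob_def by (rule cInf_lower) (use assms in \<open>auto intro!: bdd_belowI[of _ 0]\<close>)

lemma outer_prob_mono_AE:
  assumes "AE \<omega> in M. \<omega> \<in> A \<longrightarrow> \<omega> \<in> A'"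
  shows "outer_prob M A \<le> outer_prob M A'"
proof -
  obtain Z where Z: "Z \<in> null_sets M" and AZ: "\<And>\<omega>. \<omega> \<in> space M - Z \<Longrightarrow> \<omega> \<in> A \<longrightarrow> \<omega> \<in> A'"
    using assms by (rule AE_E3) blast
  show ?thesis
    unfolding outer_prob_def[of M A']
  proof (rule cInf_greatest)
    show "{measure M N |N. N \<in> sets M \<and> A' \<inter> space M \<subseteq> N} \<noteq> {}" by blast
    fix m assume "m \<in> {measure M N |N. N \<in> sets M \<and> A' \<inter> space M \<subseteq> N}"
    then obtain N where N: "N \<in> sets M" "A' \<inter> space M \<subseteq> N" and m: "m = measure M N" by blast
    have "outer_prob M A \<le> measure M (N \<union> Z)"
      by (rule outer_prob_le_measure) (use N Z AZ in auto)
    also have "\<dots> = m" using N Z m by (simp add: measure_Un_null_set)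
    finally show "outer_prob M A \<le> m" .
  qed
qed

(* The event that a path leaves the ball of radius r before time T need not be measurable;
   for continuous paths it is contained in this countable union over rational times. *)
definition rational_exceedance :: "'a measure \<Rightarrow> (real \<Rightarrow> 'a \<Rightarrow> 'b::real_normed_vector) \<Rightarrow> real \<Rightarrow> real \<Rightarrow> 'a set"
  where "rational_exceedance M B T r = (\<Union>q\<in>{0..T} \<inter> \<rat>. {\<omega> \<in> space M. r < norm (B q \<omega>)})"

lemma rational_exceedance_sets:
  assumes "\<And>t. 0 \<le> t \<Longrightarrow> B t \<in> borel_measurable M"
  shows "rational_exceedance M B T r \<in> sets M"
  unfolding rational_exceedance_def
proof (rule sets.countable_UN'')
  show "countable ({0..T} \<inter> \<rat>)" by (simp add: countable_rat)
  fix q assume "q \<in> {0..T} \<inter> \<rat>"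
  then have "B q \<in> borel_measurable M" using assms by auto
  then show "{\<omega> \<in> space M. r < norm (B q \<omega>)} \<in> sets M" by measurable
qed

lemma exceedance_imp_rational_exceedance:
  assumes "continuous_on {0..T} (\<lambda>t. B t \<omega>)" and "0 < T" and "\<omega> \<in> space M"
    and "t \<in> {0..T}" and "r < norm (B t \<omega>)"
  shows "\<omega> \<in> rational_exceedance M B T r"
proof (rule ccontr)
  assume "\<omega> \<notin> rational_exceedance M B T r"
  then have "norm (B q \<omega>) \<le> r" if "q \<in> \<rat>" "q \<in> {0..T}" for q
    using that \<open>\<omega> \<in> space M\<close> by (auto simp: rational_exceedance_def not_less)
  then have "\<forall>t\<in>{0..T}. norm (B t \<omega>) \<le> r"
    by (rule bound_on_rationals_imp_bound[OF assms(1,2)])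
  then show False using assms(4,5) by force
qed

lemma (in prob_space) measure_rational_exceedance_tendsto_0:
  assumes meas: "\<And>t. 0 \<le> t \<Longrightarrow> B t \<in> borel_measurable M"
    and cont: "AE \<omega> in M. continuous_on {0..} (\<lambda>t. B t \<omega>)"
  shows "(\<lambda>n. measure M (rational_exceedance M B T (real n))) \<longlonglongrightarrow> 0"
proof -
  define C where "C n = rational_exceedance M B T (real n)" for n
  obtain Z where Z: "Z \<in> null_sets M" and cont_Z: "\<And>\<omega>. \<omega> \<in> space M - Z \<Longrightarrow> continuous_on {0..} (\<lambda>t. B t \<omega>)"
    using cont by (rule AE_E3) blast
  have C_sets: "C n \<in> sets M" for n unfolding C_def using meas by (rule rational_exceedance_sets)
  have "decseq C"
  proof (rule antimonoI)
    fix m n :: nat assume "m \<le> n"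
    then show "C n \<le> C m" by (auto simp: C_def rational_exceedance_def intro: order_le_less_trans)
  qed
  have "(\<Inter>n. C n) \<subseteq> Z"
  proof
    fix \<omega> assume \<omega>: "\<omega> \<in> (\<Inter>n. C n)"
    show "\<omega> \<in> Z"
    proof (rule ccontr)
      assume "\<omega> \<notin> Z"
      moreover have "\<omega> \<in> space M" using \<omega> by (auto simp: C_def rational_exceedance_def)
      ultimately have "continuous_on {0..T} (\<lambda>t. B t \<omega>)"
        using cont_Z by (meson DiffI atLeastAtMost_iff atLeast_iff continuous_on_subset subsetI)
      then obtain c where c: "\<And>t. t \<in> {0..T} \<Longrightarrow> norm (B t \<omega>) \<le> c"
        using continuous_on_compact_bound[OF compact_Icc] by blast
      have "\<omega> \<in> C (nat \<lceil>c\<rceil>)" using \<omega> by blast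
      then obtain q where "q \<in> {0..T}" "real (nat \<lceil>c\<rceil>) < norm (B q \<omega>)"
        unfolding C_def rational_exceedance_def by blast
      then show False using c[of q] by linarith
    qed
  qed
  have "(\<lambda>n. measure M (C n)) \<longlonglongrightarrow> measure M (\<Inter>n. C n)"
    by (rule finite_Lim_measure_decseq) (use C_sets \<open>decseq C\<close> in auto)
  moreover have "measure M (\<Inter>n. C n) = 0"
    using C_sets by (intro measure_eq_0_null_sets null_sets_subset[OF Z _ \<open>(\<Inter>n. C n) \<subseteq> Z\<close>]) auto
  ultimately show ?thesis by (simp add: C_def)
qed

lemma (in prob_space) outer_prob_path_leaves_ball_tendsto_0:
  fixes B :: "real \<Rightarrow> 'a \<Rightarrow> 'b::real_normed_vector"
  assumes meas: "\<And>t. 0 \<le> t \<Longrightarrow> B t \<in> borel_measurable M"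
    and cont: "AE \<omega> in M. continuous_on {0..} (\<lambda>t. B t \<omega>)" and "0 < T"
  shows "((\<lambda>r. outer_prob M {\<omega> \<in> space M. \<exists>t\<in>{0..T}. r < norm (B t \<omega>)}) \<longlongrightarrow> 0) at_top"
proof (rule tendstoI)
  fix e :: real assume "0 < e"
  then obtain n where n: "measure M (rational_exceedance M B T (real n)) < e"
    using order_tendstoD(2)[OF measure_rational_exceedance_tendsto_0[OF meas cont]] eventually_sequentially
    by (metis order_refl)
  have "outer_prob M {\<omega> \<in> space M. \<exists>t\<in>{0..T}. r < norm (B t \<omega>)} < e" if "real n \<le> r" for r
  proof -
    have "AE \<omega> in M. \<omega> \<in> {\<omega> \<in> space M. \<exists>t\<in>{0..T}. r < norm (B t \<omega>)} \<longrightarrow> \<omega> \<in> rational_exceedance M B T (real n)"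
      using cont
    proof eventually_elim
      case (elim \<omega>)
      then have "continuous_on {0..T} (\<lambda>t. B t \<omega>)" by (rule continuous_on_subset) auto
      then show ?case
        using exceedance_imp_rational_exceedance[OF _ \<open>0 < T\<close>] that by fastforce
    qed
    then have "outer_prob M {\<omega> \<in> space M. \<exists>t\<in>{0..T}. r < norm (B t \<omega>)}
        \<le> outer_prob M (rational_exceedance M B T (real n))"
      by (rule outer_prob_mono_AE)
    also have "\<dots> \<le> measure M (rational_exceedance M B T (real n))"
      using rational_exceedance_sets[OF meas] by (intro outer_prob_le_measure) auto
    finally show ?thesis using n by simp
  qed
  then show "\<forall>\<^sub>F r in at_top. dist (outer_prob M {\<omega> \<in> space M. \<exists>t\<in>{0..T}. r < norm (B t \<omega>)}) 0 < e"
    unfolding eventually_at_top_linorder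
    by (auto simp: dist_real_def abs_of_nonneg[OF outer_prob_nonneg])
qed

lemma SUP_power2_norm_gt_imp_norm_gt_sqrt:
  fixes f :: "'i \<Rightarrow> 'b::real_normed_vector"
  assumes "\<xi> < (SUP t\<in>S. (norm (f t))\<^sup>2)" and "S \<noteq> {}"
  shows "\<exists>t\<in>S. sqrt \<xi> < norm (f t)"
proof (rule ccontr)
  assume "\<not> (\<exists>t\<in>S. sqrt \<xi> < norm (f t))"
  then have le: "norm (f t) \<le> sqrt \<xi>" if "t \<in> S" for t using that by (simp add: not_less)
  obtain t0 where "t0 \<in> S" using \<open>S \<noteq> {}\<close> by blast
  then have "0 \<le> sqrt \<xi>" using le[of t0] norm_ge_zero order_trans by blast
  then have "0 \<le> \<xi>" by simp
  have "(SUP t\<in>S. (norm (f t))\<^sup>2) \<le> (sqrt \<xi>)\<^sup>2"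
    using \<open>S \<noteq> {}\<close> le by (intro cSUP_least power_mono) auto
  then show False using assms(1) \<open>0 \<le> \<xi>\<close> by simp
qed

lemma (in prob_space) self_interacting_path_small_noise:
  fixes g w :: "real^'n \<Rightarrow> real^'n" and B :: "real \<Rightarrow> 'a \<Rightarrow> real^'n"
    and X :: "real \<Rightarrow> real \<Rightarrow> 'a \<Rightarrow> real^'n"
  assumes lip_g: "\<And>R. \<exists>L. L-lipschitz_on (cball 0 R) g" and lip_w: "\<And>R. \<exists>L. L-lipschitz_on (cball 0 R) w"
    and B_meas: "\<And>t. 0 \<le> t \<Longrightarrow> B t \<in> borel_measurable M"
    and B_cont: "AE \<omega> in M. continuous_on {0..} (\<lambda>t. B t \<omega>)"
    and X_sol: "\<And>\<sigma>. 0 < \<sigma> \<Longrightarrow> AE \<omega> in M. self_interacting_path g w x0 (\<lambda>t. \<sigma> *\<^sub>R B t \<omega>) (\<lambda>t. X \<sigma> t \<omega>)"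
    and \<psi>: "self_interacting_path g w x0 (\<lambda>t. 0) \<psi>" and "0 < T" and "0 < \<epsilon>"
  shows "((\<lambda>\<sigma>. outer_prob M {\<omega> \<in> space M. \<exists>t\<in>{0..T}. \<epsilon> < norm (X \<sigma> t \<omega> - \<psi> t)}) \<longlongrightarrow> 0) (at_right 0)"
proof -
  obtain \<delta> where "0 < \<delta>" and stable: "\<And>b x. self_interacting_path g w x0 b x \<Longrightarrow>
      \<forall>t\<in>{0..T}. norm (b t) \<le> \<delta> \<Longrightarrow> \<forall>t\<in>{0..T}. norm (x t - \<psi> t) \<le> \<epsilon>"
    by (rule self_interacting_path_stable[OF lip_g lip_w \<psi> \<open>0 < T\<close> \<open>0 < \<epsilon>\<close>]) blast
  define F where "F r = {\<omega> \<in> space M. \<exists>t\<in>{0..T}. r < norm (B t \<omega>)}" for r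
  have "outer_prob M {\<omega> \<in> space M. \<exists>t\<in>{0..T}. \<epsilon> < norm (X \<sigma> t \<omega> - \<psi> t)} \<le> outer_prob M (F (\<delta> / \<sigma>))"
    if "0 < \<sigma>" for \<sigma>
  proof (rule outer_prob_mono_AE)
    have "\<omega> \<in> F (\<delta> / \<sigma>)"
      if sip: "self_interacting_path g w x0 (\<lambda>t. \<sigma> *\<^sub>R B t \<omega>) (\<lambda>t. X \<sigma> t \<omega>)" and "\<omega> \<in> space M"
        and "t \<in> {0..T}" "\<epsilon> < norm (X \<sigma> t \<omega> - \<psi> t)" for \<omega> t
    proof (rule ccontr)
      assume "\<omega> \<notin> F (\<delta> / \<sigma>)"
      then have "\<forall>t\<in>{0..T}. norm (\<sigma> *\<^sub>R B t \<omega>) \<le> \<delta>"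
        using \<open>0 < \<sigma>\<close> \<open>\<omega> \<in> space M\<close> by (auto simp: F_def not_less pos_le_divide_eq mult.commute)
      then show False using stable[OF sip] that(3,4) by force
    qed
    then show "AE \<omega> in M. \<omega> \<in> {\<omega> \<in> space M. \<exists>t\<in>{0..T}. \<epsilon> < norm (X \<sigma> t \<omega> - \<psi> t)} \<longrightarrow> \<omega> \<in> F (\<delta> / \<sigma>)"
      by (intro AE_mp[OF X_sol[OF \<open>0 < \<sigma>\<close>] AE_I2]) blast
  qed
  then have below: "\<forall>\<^sub>F \<sigma> in at_right 0.
      outer_prob M {\<omega> \<in> space M. \<exists>t\<in>{0..T}. \<epsilon> < norm (X \<sigma> t \<omega> - \<psi> t)} \<le> outer_prob M (F (\<delta> / \<sigma>))"
    by (rule eventually_at_right_less[THEN eventually_mono])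
  have "filterlim (\<lambda>\<sigma>. \<delta> / \<sigma>) at_top (at_right 0)"
    using filterlim_tendsto_pos_mult_at_top[OF tendsto_const \<open>0 < \<delta>\<close> filterlim_inverse_at_top_right]
    by (simp add: divide_inverse)
  then have vanish: "((\<lambda>\<sigma>. outer_prob M (F (\<delta> / \<sigma>))) \<longlongrightarrow> 0) (at_right 0)"
    using outer_prob_path_leaves_ball_tendsto_0[OF B_meas B_cont \<open>0 < T\<close>] unfolding F_def
    by (rule filterlim_compose[rotated])
  show ?thesis
    by (rule tendsto_sandwich[OF _ below tendsto_const vanish]) (simp add: outer_prob_nonneg)
qed

theorem proposition3p1:
  fixes V W :: "real^'n \<Rightarrow> real"
    and gV gW :: "real^'n \<Rightarrow> real^'n"
    and HV HW :: "real^'n \<Rightarrow> real^'n^'n"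
    and x0 :: "real^'n"
    and M :: "'a measure"
    and B :: "real \<Rightarrow> 'a \<Rightarrow> real^'n"
    and X :: "real \<Rightarrow> real \<Rightarrow> 'a \<Rightarrow> real^'n"
    and \<psi> :: "real \<Rightarrow> real^'n"
    and \<xi> T :: real
  assumes dV: "\<And>x. (V has_derivative (\<lambda>h. gV x \<bullet> h)) (at x)"
    and dgV: "\<And>x. (gV has_derivative (\<lambda>h. HV x *v h)) (at x)"
    and contHV: "continuous_on UNIV HV"
    and dW: "\<And>x. (W has_derivative (\<lambda>h. gW x \<bullet> h)) (at x)"
    and dgW: "\<And>x. (gW has_derivative (\<lambda>h. HW x *v h)) (at x)"
    and contHW: "continuous_on UNIV HW"
    and V_nonneg: "\<And>x. V x \<ge> 0"
    and W_nonneg: "\<And>x. W x \<ge> 0"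
    and poly_bound: "\<exists>P :: real poly. \<forall>x. poly P (norm x) \<ge> 1 \<and>
        \<bar>W x\<bar> + norm (gW x) + onorm (\<lambda>h. HW x *v h) + \<bar>V x\<bar> + norm (gV x)
          + onorm (\<lambda>h. HV x *v h) \<le> poly P (norm x)"
    and V_convex: "\<exists>\<rho>>0. \<forall>x h. h \<bullet> (HV x *v h) \<ge> \<rho> * (norm h)\<^sup>2"
    and W_convex: "\<exists>\<alpha>>0. \<forall>x h. h \<bullet> (HW x *v h) \<ge> \<alpha> * (norm h)\<^sup>2"
    and V_lap: "\<exists>a. \<forall>x. (\<Sum>i\<in>UNIV. HV x $ i $ i) \<le> a * V x"
    and V_grad_inf: "filterlim (\<lambda>x. (norm (gV x))\<^sup>2 / V x) at_top at_infinity"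
    and V_min: "\<exists>m. \<forall>x. x \<noteq> m \<longrightarrow> V m < V x"
    and W_radial: "\<exists>G :: real \<Rightarrow> real. \<forall>x. W x = G (norm x)"
    and BM: "std_brownian_motion M B"
    and X_meas: "\<And>\<sigma> t. \<sigma> > 0 \<Longrightarrow> t \<ge> 0 \<Longrightarrow> X \<sigma> t \<in> borel_measurable M"
    and X_sol: "\<And>\<sigma>. \<sigma> > 0 \<Longrightarrow>
        AE \<omega> in M. self_interacting_path gV gW x0 (\<lambda>t. \<sigma> *\<^sub>R B t \<omega>) (\<lambda>t. X \<sigma> t \<omega>)"
    and psi_sol: "self_interacting_path gV gW x0 (\<lambda>t. 0) \<psi>"
    and xi_pos: "\<xi> > 0"
    and T_pos: "T > 0"
  shows "((\<lambda>\<sigma>. outer_prob M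
            {\<omega> \<in> space M. (SUP t\<in>{0..T}. (norm (X \<sigma> t \<omega> - \<psi> t))\<^sup>2) > \<xi>})
          \<longlongrightarrow> 0) (at_right 0)"
proof -
  from BM have "prob_space M" and B_meas: "\<And>t. 0 \<le> t \<Longrightarrow> B t \<in> borel_measurable M"
    and B_cont: "AE \<omega> in M. continuous_on {0..} (\<lambda>t. B t \<omega>)"
    by (auto simp: std_brownian_motion_def elim: AE_mp)
  interpret prob_space M by fact
  obtain P :: "real poly" where P: "\<And>x. \<bar>W x\<bar> + norm (gW x) + onorm (\<lambda>h. HW x *v h) + \<bar>V x\<bar>
      + norm (gV x) + onorm (\<lambda>h. HV x *v h) \<le> poly P (norm x)"
    using poly_bound by blast
  have "onorm (\<lambda>h. HV x *v h) \<le> poly P (norm x)" "onorm (\<lambda>h. HW x *v h) \<le> poly P (norm x)" for x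
    using P[of x] onorm_pos_le[OF matrix_vector_mul_bounded_linear, of "HV x"]
      onorm_pos_le[OF matrix_vector_mul_bounded_linear, of "HW x"]
      abs_ge_zero[of "W x"] abs_ge_zero[of "V x"] norm_ge_zero[of "gW x"] norm_ge_zero[of "gV x"]
    by linarith+
  then have lip_gV: "\<And>R. \<exists>L. L-lipschitz_on (cball 0 R) gV" and lip_gW: "\<And>R. \<exists>L. L-lipschitz_on (cball 0 R) gW"
    using poly_bounded_derivative_imp_lipschitz_on_cball[OF dgV] poly_bounded_derivative_imp_lipschitz_on_cball[OF dgW]
    by blast+
  have lim: "((\<lambda>\<sigma>. outer_prob M {\<omega> \<in> space M. \<exists>t\<in>{0..T}. sqrt \<xi> < norm (X \<sigma> t \<omega> - \<psi> t)}) \<longlongrightarrow> 0) (at_right 0)"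
    by (rule self_interacting_path_small_noise[OF lip_gV lip_gW B_meas B_cont X_sol psi_sol T_pos])
      (use xi_pos in simp_all)
  have mono: "outer_prob M {\<omega> \<in> space M. (SUP t\<in>{0..T}. (norm (X \<sigma> t \<omega> - \<psi> t))\<^sup>2) > \<xi>}
      \<le> outer_prob M {\<omega> \<in> space M. \<exists>t\<in>{0..T}. sqrt \<xi> < norm (X \<sigma> t \<omega> - \<psi> t)}" for \<sigma>
    using SUP_power2_norm_gt_imp_norm_gt_sqrt[where f = "\<lambda>t. X \<sigma> t \<omega> - \<psi> t" for \<omega>] T_pos
    by (intro outer_prob_mono_AE AE_I2) auto
  show ?thesis
    by (rule tendsto_sandwich[OF _ _ tendsto_const lim]) (simp_all add: outer_prob_nonneg mono)
qed

end
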